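(* Let $A\in\mathbb{F}_2^{m_A\times n_A}$, $B\in\mathbb{F}_2^{m_B\times n_B}$ and consider the hypergraph product code $H_X=[A\otimes I_{m_B}\mid I_{m_A}\otimes B]$, $H_Z=[I_{n_A}\otimes B^{T}\mid A^{T}\otimes I_{n_B}]$. The left--right circuit with left/right partition given by this block structure (so $L_X=A\otimes I_{m_B}$, $R_X=I_{m_A}\otimes B$, $L_Z=I_{n_A}\otimes B^T$, $R_Z=A^T\otimes I_{n_B}$) and minimal edge colourings of $L_X,R_X,L_Z,R_Z$ has depth $t=\delta(A)+\delta(B)+2$. Moreover $\delta(H_{XZ})=\delta(A)+\delta(B)$, so every single-ancilla CNOT-based SEC for this code has depth at least $\delta(A)+\delta(B)$.
   Context: For a binary matrix $M$, $r(M)$ and $c(M)$ are its maximum row and column weights and $\delta(M)=\max(r(M),c(M))$ (the maximum degree of its bipartite Tanner graph, with a variable node per column, a check node per row, and an edge per entry 1). $H_{XZ}$ denotes $H_X$ stacked vertically above $H_Z$. Single-ancilla CNOT-based SEC: each check (row of $H_X$ or $H_Z$) has a dedicated ancilla; an $X$ check's ancilla is prepared in $|+\rangle$, CNOTs go from ancilla to each data qubit in its support, then measured in $X$; a $Z$ check's ancilla is prepared in $|0\rangle$, CNOTs go from each data qubit in its support to the ancilla, then measured in $Z$. Each operation takes one time step and a qubit participates in at most one operation per step. The depth of an SEC is $t=\lim_{m\to\infty}T^{(m)}/m$, where $T^{(m)}$ is the number of time steps for $m$ consecutive rounds (rounds may overlap in time). Left--right circuit (LRC): partition the data qubits into a left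 and right set, writing $H_X=[L_X\mid R_X]$, $H_Z=[L_Z\mid R_Z]$. Choose a proper edge colouring $C(H)$ with colours $\{1,\dots,|C(H)|\}$ of the Tanner graph of each $H\in\{L_X,R_X,L_Z,R_Z\}$ (minimal means $|C(H)|=\delta(H)$). CNOTs of $L_X$ and $R_Z$ are applied in parallel, the CNOT on an edge of colour $c$ at time step $c+1$, taking $t_1=\max(|C(L_X)|,|C(R_Z)|)$ steps; then CNOTs of $L_Z$ and $R_X$ are applied with colour $c$ at time step $t_1+1+c$, taking $t_2=\max(|C(L_Z)|,|C(R_X)|)$ steps. $X$ ancillas are prepared at step 1 and measured at step $t_1+t_2+2$; $Z$ ancillas are measured at step $t_1+2$ and prepared at step $t_1+3$ (for the next round), with rounds repeated periodically, so the LRC has depth $t_1+t_2+2$. *)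

theory Defs
  imports Complex_Main
begin

text \<open>A binary matrix over F2 is given by its numbers of rows and columns and an
entry function (True = 1, False = 0); entries outside the index range are ignored.\<close>

record bmat =
  nr  :: nat
  nc  :: nat
  ent :: "nat \<Rightarrow> nat \<Rightarrow> bool"

definition ident :: "nat \<Rightarrow> bmat" where
  "ident k = \<lparr>nr = k, nc = k, ent = (\<lambda>i j. i = j)\<rparr>"

definition transp :: "bmat \<Rightarrow> bmat" where
  "transp M = \<lparr>nr = nc M, nc = nr M, ent = (\<lambda>i j. ent M j i)\<rparr>"

text \<open>Kronecker product, row index (i1, i2) is i1 * nr N + i2, column likewise.\<close>
definition kron :: "bmat \<Rightarrow> bmat \<Rightarrow> bmat" where
  "kron M N = \<lparr>nr = nr M * nr N, nc = nc M * nc N,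
     ent = (\<lambda>i j. ent M (i div nr N) (j div nc N) \<and> ent N (i mod nr N) (j mod nc N))\<rparr>"

definition hcat :: "bmat \<Rightarrow> bmat \<Rightarrow> bmat" where
  "hcat M N = \<lparr>nr = nr M, nc = nc M + nc N,
     ent = (\<lambda>i j. if j < nc M then ent M i j else ent N i (j - nc M))\<rparr>"

definition vcat :: "bmat \<Rightarrow> bmat \<Rightarrow> bmat" where
  "vcat M N = \<lparr>nr = nr M + nr N, nc = nc M,
     ent = (\<lambda>i j. if i < nr M then ent M i j else ent N (i - nr M) j)\<rparr>"

definition row_wt :: "bmat \<Rightarrow> nat \<Rightarrow> nat" where
  "row_wt M i = card {j. j < nc M \<and> ent M i j}"

definition col_wt :: "bmat \<Rightarrow> nat \<Rightarrow> nat" where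
  "col_wt M j = card {i. i < nr M \<and> ent M i j}"

definition rmax :: "bmat \<Rightarrow> nat" where
  "rmax M = Max (insert 0 (row_wt M ` {..<nr M}))"

definition cmax :: "bmat \<Rightarrow> nat" where
  "cmax M = Max (insert 0 (col_wt M ` {..<nc M}))"

definition delta :: "bmat \<Rightarrow> nat" where
  "delta M = max (rmax M) (cmax M)"

text \<open>Edges of the Tanner graph of M: pairs (check i, variable j) with M i j = 1.
A proper edge colouring with colours {1..k}: adjacent edges (sharing a check node or
a variable node) receive different colours.\<close>
definition proper_colouring :: "bmat \<Rightarrow> nat \<Rightarrow> (nat \<Rightarrow> nat \<Rightarrow> nat) \<Rightarrow> bool" where
  "proper_colouring M k col \<longleftrightarrow>
     (\<forall>i<nr M. \<forall>j<nc M. ent M i j \<longrightarrow> col i j \<in> {1..k}) \<and>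
     (\<forall>i<nr M. \<forall>j<nc M. \<forall>j'<nc M. ent M i j \<and> ent M i j' \<and> j \<noteq> j' \<longrightarrow> col i j \<noteq> col i j') \<and>
     (\<forall>i<nr M. \<forall>i'<nr M. \<forall>j<nc M. ent M i j \<and> ent M i' j \<and> i \<noteq> i' \<longrightarrow> col i j \<noteq> col i' j)"

definition minimal_colouring :: "bmat \<Rightarrow> nat \<Rightarrow> (nat \<Rightarrow> nat \<Rightarrow> nat) \<Rightarrow> bool" where
  "minimal_colouring M k col \<longleftrightarrow> proper_colouring M k col \<and> k = delta M"

text \<open>Depth of the LRC built from colourings of L_X, R_X, L_Z, R_Z using
kLX, kRX, kLZ, kRZ colours: t1 + t2 + 2 with t1 = max |C(L_X)| |C(R_Z)|,
t2 = max |C(L_Z)| |C(R_X)|.\<close>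
definition lrc_depth :: "nat \<Rightarrow> nat \<Rightarrow> nat \<Rightarrow> nat \<Rightarrow> nat" where
  "lrc_depth kLX kRX kLZ kRZ = max kLX kRZ + max kLZ kRX + 2"

text \<open>Qubits: data qubits (one per column of H_XZ) and one dedicated ancilla per check
(row of H_XZ). Operations of round r: preparation and measurement of the ancilla of
check i, and a CNOT between the ancilla of check i and each data qubit j in its support.\<close>

datatype qubit = Dat nat | Anc nat

datatype op = Prep nat nat | Meas nat nat | CX nat nat nat

fun op_qubits :: "op \<Rightarrow> qubit set" where
  "op_qubits (Prep r i) = {Anc i}"
| "op_qubits (Meas r i) = {Anc i}"
| "op_qubits (CX r i j) = {Anc i, Dat j}"

definition sec_ops :: "bmat \<Rightarrow> nat \<Rightarrow> op set" where
  "sec_ops H m =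
     {Prep r i | r i. r < m \<and> i < nr H} \<union> {Meas r i | r i. r < m \<and> i < nr H} \<union>
     {CX r i j | r i j. r < m \<and> i < nr H \<and> j < nc H \<and> ent H i j}"

text \<open>Rounds may overlap in time.\<close>
definition sec_schedule :: "bmat \<Rightarrow> nat \<Rightarrow> (op \<Rightarrow> nat) \<Rightarrow> bool" where
  "sec_schedule H m \<tau> \<longleftrightarrow>
     (\<forall>p\<in>sec_ops H m. 1 \<le> \<tau> p) \<and>
     (\<forall>p\<in>sec_ops H m. \<forall>p'\<in>sec_ops H m.
        p \<noteq> p' \<and> op_qubits p \<inter> op_qubits p' \<noteq> {} \<longrightarrow> \<tau> p \<noteq> \<tau> p') \<and>
     (\<forall>r<m. \<forall>i<nr H. \<forall>j<nc H. ent H i j \<longrightarrow>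
        \<tau> (Prep r i) < \<tau> (CX r i j) \<and> \<tau> (CX r i j) < \<tau> (Meas r i)) \<and>
     (\<forall>r<m. \<forall>i<nr H. \<tau> (Prep r i) < \<tau> (Meas r i)) \<and>
     (\<forall>r. Suc r < m \<longrightarrow> (\<forall>i<nr H. \<tau> (Meas r i) < \<tau> (Prep (Suc r) i)))"

definition sec_steps :: "bmat \<Rightarrow> nat \<Rightarrow> (op \<Rightarrow> nat) \<Rightarrow> nat" where
  "sec_steps H m \<tau> = Max (insert 0 (\<tau> ` sec_ops H m))"

definition sec_has_depth :: "bmat \<Rightarrow> (nat \<Rightarrow> op \<Rightarrow> nat) \<Rightarrow> real \<Rightarrow> bool" where
  "sec_has_depth H sched t \<longleftrightarrow>
     (\<forall>m. sec_schedule H m (sched m)) \<and>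
     (\<lambda>m. real (sec_steps H m (sched m)) / real m) \<longlonglongrightarrow> t"

end

(*
  The Tanner graph of a binary matrix is bipartite, so by Koenig's edge colouring theorem its
  edges can be properly coloured with as many colours as its maximum degree; the colouring is
  built edge by edge, swapping two colours along an alternating path whenever the endpoints of
  the new edge miss different colours. Kronecker products with identity matrices keep all row and
  column weights, so L_X, R_Z have degree delta(A) and R_X, L_Z degree delta(B), which gives the
  depth of the left-right circuit. A row or column of H_XZ is indexed by a pair and its weight is
  a row or column weight of A plus one of B, all four combinations occurring; hence
  delta(H_XZ) = delta(A) + delta(B). Finally, in m rounds the CNOTs of one check, or of one data
  qubit, all act on a common qubit and so need distinct time steps: T^(m) >= m delta(H_XZ).
*)
theory Submission
  imports Defs "HOL-Combinatorics.Transposition"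
begin

section \<open>Koenig's edge colouring theorem for bipartite graphs\<close>

text \<open>Edges are pairs (row, column); rows and columns are the two sides of the graph even
  where their indices coincide.\<close>
definition proper_edge_colouring :: "(nat \<times> nat) set \<Rightarrow> nat \<Rightarrow> (nat \<Rightarrow> nat \<Rightarrow> nat) \<Rightarrow> bool" where
  "proper_edge_colouring E k col \<longleftrightarrow>
     (\<forall>r c. (r, c) \<in> E \<longrightarrow> col r c \<in> {1..k}) \<and>
     (\<forall>r c c'. (r, c) \<in> E \<longrightarrow> (r, c') \<in> E \<longrightarrow> c \<noteq> c' \<longrightarrow> col r c \<noteq> col r c') \<and>
     (\<forall>r r' c. (r, c) \<in> E \<longrightarrow> (r', c) \<in> E \<longrightarrow> r \<noteq> r' \<longrightarrow> col r c \<noteq> col r' c)"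

lemma missing_colour:
  assumes "finite S" and "card S < k"
  obtains a where "a \<in> {1..k}" and "a \<notin> f ` S"
proof -
  have "card (f ` S) < card {1..k}"
    using card_image_le[OF assms(1), of f] assms(2) by simp
  then have "\<not> {1..k} \<subseteq> f ` S"
    using card_mono[OF finite_imageI[OF assms(1)]] by (meson leD)
  then show ?thesis using that by blast
qed

lemma proper_edge_colouring_insert:
  assumes col: "proper_edge_colouring E k col" and a: "a \<in> {1..k}"
    and free_i: "\<forall>c. (i, c) \<in> E \<longrightarrow> col i c \<noteq> a"
    and free_j: "\<forall>r. (r, j) \<in> E \<longrightarrow> col r j \<noteq> a"
  shows "proper_edge_colouring (insert (i, j) E) k (\<lambda>r c. if (r, c) = (i, j) then a else col r c)"
  using assms unfolding proper_edge_colouring_def by (auto 0 3)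

text \<open>Kempe chain argument: swapping the colours a and b along the alternating path that
  starts at column j frees colour a at j without using it at row i, because that path can
  enter a row only along an a-edge.\<close>
lemma kempe_swap:
  assumes col: "proper_edge_colouring E k col" and ab: "a \<in> {1..k}" "b \<in> {1..k}"
    and free_i: "\<forall>c. (i, c) \<in> E \<longrightarrow> col i c \<noteq> a"
    and free_j: "\<forall>r. (r, j) \<in> E \<longrightarrow> col r j \<noteq> b"
  obtains col' where "proper_edge_colouring E k col'"
    and "\<forall>c. (i, c) \<in> E \<longrightarrow> col' i c \<noteq> a" and "\<forall>r. (r, j) \<in> E \<longrightarrow> col' r j \<noteq> a"
proof -
  have in_range: "\<And>r c. (r, c) \<in> E \<Longrightarrow> col r c \<in> {1..k}"
    and row: "\<And>r c c'. (r, c) \<in> E \<Longrightarrow> (r, c') \<in> E \<Longrightarrow> col r c = col r c' \<Longrightarrow> c = c'"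
    and column: "\<And>r r' c. (r, c) \<in> E \<Longrightarrow> (r', c) \<in> E \<Longrightarrow> col r c = col r' c \<Longrightarrow> r = r'"
    using col unfolding proper_edge_colouring_def by fast+
  define step where "step = {(c, c'). \<exists>r. (r, c) \<in> E \<and> col r c = a \<and> (r, c') \<in> E \<and> col r c' = b}"
  define K where "K = {c. (j, c) \<in> step\<^sup>*}"
  have step_K: "c' \<in> K" if "c \<in> K" "(r, c) \<in> E" "col r c = a" "(r, c') \<in> E" "col r c' = b" for r c c'
    using that rtrancl_into_rtrancl[of j c step c'] unfolding K_def step_def by blast
  have pred_K: "\<exists>c0\<in>K. (r, c0) \<in> E \<and> col r c0 = a" if "c \<in> K" "(r, c) \<in> E" "col r c = b" for r c
  proof -
    have "c \<noteq> j" using that free_j by blast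
    then obtain c0 r' where "c0 \<in> K" "(r', c0) \<in> E" "col r' c0 = a" "(r', c) \<in> E" "col r' c = b"
      using \<open>c \<in> K\<close> unfolding K_def step_def by (auto elim: rtranclE)
    moreover have "r' = r" using column that calculation by metis
    ultimately show ?thesis by blast
  qed
  have swap_K: "Transposition.transpose a b (col r c) \<noteq> col r c'"
    if "c \<in> K" "c' \<notin> K" "(r, c) \<in> E" "(r, c') \<in> E" for r c c'
  proof -
    have "c \<noteq> c'" using that by blast
    consider "col r c = a" | "col r c = b" | "col r c \<noteq> a" "col r c \<noteq> b" by blast
    then show ?thesis
    proof cases
      case 1
      then show ?thesis using that step_K by fastforce
    next
      case 2
      then show ?thesis using that pred_K row by fastforce
    next
      case 3
      then show ?thesis using row that \<open>c \<noteq> c'\<close> by auto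
    qed
  qed
  define col' where "col' r c = (if c \<in> K then Transposition.transpose a b (col r c) else col r c)" for r c
  have "proper_edge_colouring E k col'"
    unfolding proper_edge_colouring_def
  proof (intro conjI allI impI)
    show "col' r c \<in> {1..k}" if "(r, c) \<in> E" for r c
      using in_range[OF that] ab by (auto simp: col'_def transpose_def)
  next
    fix r c c' assume "(r, c) \<in> E" "(r, c') \<in> E" "c \<noteq> c'"
    then show "col' r c \<noteq> col' r c'"
      using row swap_K[of c c' r] swap_K[of c' c r] by (auto simp: col'_def transpose_eq_iff)
  next
    fix r r' c assume "(r, c) \<in> E" "(r', c) \<in> E" "r \<noteq> r'"
    then show "col' r c \<noteq> col' r' c"
      using column by (auto simp: col'_def transpose_eq_iff)
  qed
  moreover have "col' i c \<noteq> a" if "(i, c) \<in> E" for c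
    using that free_i pred_K by (auto simp: col'_def transpose_eq_iff)
  moreover have "col' r j \<noteq> a" if "(r, j) \<in> E" for r
    using that free_j by (auto simp: col'_def K_def transpose_eq_iff)
  ultimately show ?thesis using that by blast
qed

theorem konig_edge_colouring:
  assumes "finite E"
    and "\<And>r. card {c. (r, c) \<in> E} \<le> k" and "\<And>c. card {r. (r, c) \<in> E} \<le> k"
  shows "\<exists>col. proper_edge_colouring E k col"
  using assms
proof (induction E rule: finite_induct)
  case empty
  then show ?case unfolding proper_edge_colouring_def by blast
next
  case (insert e E)
  obtain i j where e: "e = (i, j)" by fastforce
  have fin_row: "finite {c. (r, c) \<in> F}" if "finite F" for r and F :: "(nat \<times> nat) set"
    using finite_imageI[OF that, of snd] by (rule finite_subset[rotated]) force
  have fin_col: "finite {r. (r, c) \<in> F}" if "finite F" for c and F :: "(nat \<times> nat) set"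
    using finite_imageI[OF that, of fst] by (rule finite_subset[rotated]) force
  have "card {c. (r, c) \<in> E} \<le> card {c. (r, c) \<in> insert e E}" for r
    by (rule card_mono) (use fin_row[of "insert e E"] insert.hyps(1) in auto)
  moreover have "card {r. (r, c) \<in> E} \<le> card {r. (r, c) \<in> insert e E}" for c
    by (rule card_mono) (use fin_col[of "insert e E"] insert.hyps(1) in auto)
  ultimately obtain col where col: "proper_edge_colouring E k col"
    using insert.IH insert.prems le_trans by blast
  have "{c. (i, c) \<in> insert e E} = insert j {c. (i, c) \<in> E}"
    and "j \<notin> {c. (i, c) \<in> E}" using e insert.hyps(2) by auto
  then have "card {c. (i, c) \<in> E} < k"
    using insert.prems(1)[of i] fin_row[OF insert.hyps(1), of i] by simp
  then obtain a where a: "a \<in> {1..k}" "a \<notin> col i ` {c. (i, c) \<in> E}"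
    using missing_colour[OF fin_row[OF insert.hyps(1)]] by blast
  have "{r. (r, j) \<in> insert e E} = insert i {r. (r, j) \<in> E}"
    and "i \<notin> {r. (r, j) \<in> E}" using e insert.hyps(2) by auto
  then have "card {r. (r, j) \<in> E} < k"
    using insert.prems(2)[of j] fin_col[OF insert.hyps(1), of j] by simp
  then obtain b where b: "b \<in> {1..k}" "b \<notin> (\<lambda>r. col r j) ` {r. (r, j) \<in> E}"
    using missing_colour[OF fin_col[OF insert.hyps(1)]] by blast
  have "\<forall>c. (i, c) \<in> E \<longrightarrow> col i c \<noteq> a" and "\<forall>r. (r, j) \<in> E \<longrightarrow> col r j \<noteq> b"
    using a(2) b(2) by blast+
  then obtain col' where "proper_edge_colouring E k col'"
    and "\<forall>c. (i, c) \<in> E \<longrightarrow> col' i c \<noteq> a" and "\<forall>r. (r, j) \<in> E \<longrightarrow> col' r j \<noteq> a"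
    by (rule kempe_swap[OF col a(1) b(1)])
  then show ?case using proper_edge_colouring_insert[OF _ a(1)] e by blast
qed

section \<open>Row and column weights of block matrices\<close>

lemma bmat_dims [simp]:
  "nr (ident n) = n" "nc (ident n) = n"
  "nr (transp M) = nc M" "nc (transp M) = nr M"
  "nr (kron M N) = nr M * nr N" "nc (kron M N) = nc M * nc N"
  "nr (hcat M N) = nr M" "nc (hcat M N) = nc M + nc N"
  "nr (vcat M N) = nr M + nr N" "nc (vcat M N) = nc M"
  by (simp_all add: ident_def transp_def kron_def hcat_def vcat_def)

lemma row_le_rmax: "i < nr M \<Longrightarrow> row_wt M i \<le> rmax M"
  unfolding rmax_def by simp

lemma col_le_cmax: "j < nc M \<Longrightarrow> col_wt M j \<le> cmax M"
  unfolding cmax_def by simp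

lemma rmax_le_iff: "rmax M \<le> k \<longleftrightarrow> (\<forall>i < nr M. row_wt M i \<le> k)"
  unfolding rmax_def by auto

lemma rmax_attained:
  assumes "0 < nr M"
  obtains i where "i < nr M" and "row_wt M i = rmax M"
proof -
  have "rmax M \<in> insert 0 (row_wt M ` {..<nr M})"
    unfolding rmax_def by (rule Max_in) auto
  then show ?thesis
    using that row_le_rmax[of 0 M] assms by auto
qed

lemma rmax_eqI:
  assumes "\<And>i. i < nr M \<Longrightarrow> row_wt M i \<le> k" and "i < nr M" and "row_wt M i = k"
  shows "rmax M = k"
  using assms row_le_rmax[of i M] rmax_le_iff[of M k] by simp

lemma row_wt_transp [simp]: "row_wt (transp M) i = col_wt M i"
  and col_wt_transp [simp]: "col_wt (transp M) j = row_wt M j"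
  unfolding row_wt_def col_wt_def transp_def by simp_all

lemma rmax_transp [simp]: "rmax (transp M) = cmax M"
  and cmax_transp [simp]: "cmax (transp M) = rmax M"
  unfolding rmax_def cmax_def by simp_all

lemma delta_transp [simp]: "delta (transp M) = delta M"
  unfolding delta_def by simp

lemma cmax_attained:
  assumes "0 < nc M"
  obtains j where "j < nc M" and "col_wt M j = cmax M"
  using rmax_attained[of "transp M"] assms by auto

lemma transp_ident [simp]: "transp (ident n) = ident n"
  unfolding transp_def ident_def by auto

lemma transp_kron: "transp (kron M N) = kron (transp M) (transp N)"
  unfolding transp_def kron_def by simp

lemma transp_hcat: "transp (hcat M N) = vcat (transp M) (transp N)"
  unfolding transp_def hcat_def vcat_def by simp

lemma transp_vcat: "transp (vcat M N) = hcat (transp M) (transp N)"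
  unfolding transp_def hcat_def vcat_def by simp

lemma mult_add_less_mult: "a < p \<Longrightarrow> b < q \<Longrightarrow> a * q + b < p * q" for a b p q :: nat
proof -
  assume "a < p" "b < q"
  then have "a * q + b < (a + 1) * q" by simp
  also have "\<dots> \<le> p * q" using \<open>a < p\<close> by (intro mult_right_mono) auto
  finally show ?thesis .
qed

lemma card_divmod:
  fixes p q :: nat
  shows "card {x. x < p * q \<and> P (x div q) \<and> Q (x mod q)} = card {a. a < p \<and> P a} * card {b. b < q \<and> Q b}"
proof (cases "q = 0")
  case False
  let ?A = "{a. a < p \<and> P a}" and ?B = "{b. b < q \<and> Q b}"
  have "{x. x < p * q \<and> P (x div q) \<and> Q (x mod q)} = (\<lambda>(a, b). a * q + b) ` (?A \<times> ?B)"
  proof (intro set_eqI iffI)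
    fix x assume "x \<in> {x. x < p * q \<and> P (x div q) \<and> Q (x mod q)}"
    then show "x \<in> (\<lambda>(a, b). a * q + b) ` (?A \<times> ?B)"
      using False by (intro image_eqI[of x _ "(x div q, x mod q)"]) (auto simp: less_mult_imp_div_less)
  qed (use mult_add_less_mult in auto)
  moreover have "inj_on (\<lambda>(a, b). a * q + b) (?A \<times> ?B)"
  proof (rule inj_onI, clarsimp)
    fix a b a' b' assume "a * q + b = a' * q + b'" and "b < q" "b' < q"
    then have "(a * q + b) div q = a'" "(a * q + b) mod q = b'" by simp_all
    moreover have "(a * q + b) div q = a" "(a * q + b) mod q = b" using \<open>b < q\<close> by simp_all
    ultimately show "a = a' \<and> b = b'" by simp
  qed
  ultimately show ?thesis by (simp add: card_image card_cartesian_product)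
qed simp

lemma row_wt_kron: "row_wt (kron M N) i = row_wt M (i div nr N) * row_wt N (i mod nr N)"
  unfolding row_wt_def kron_def by (simp add: card_divmod)

lemma row_wt_ident: "i < n \<Longrightarrow> row_wt (ident n) i = 1"
  unfolding row_wt_def ident_def by (simp add: Collect_conj_eq)

lemma row_wt_hcat: "row_wt (hcat M N) i = row_wt M i + row_wt N i"
proof -
  let ?A = "{j. j < nc M \<and> ent M i j}" and ?B = "{j. j < nc N \<and> ent N i j}"
  have "{j. j < nc (hcat M N) \<and> ent (hcat M N) i j} = ?A \<union> (\<lambda>j. j + nc M) ` ?B"
    unfolding hcat_def by (auto simp: image_iff)
      (smt (verit) add_diff_inverse_nat add.commute less_diff_conv2 not_less)+
  moreover have "card (?A \<union> (\<lambda>j. j + nc M) ` ?B) = card ?A + card ?B"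
    by (subst card_Un_disjoint) (auto simp: card_image)
  ultimately show ?thesis unfolding row_wt_def by simp
qed

lemma row_wt_vcat:
  "nc N = nc M \<Longrightarrow> row_wt (vcat M N) i = (if i < nr M then row_wt M i else row_wt N (i - nr M))"
  unfolding row_wt_def vcat_def by simp

lemma rmax_kron: "rmax (kron M N) = rmax M * rmax N"
proof (cases "0 < nr M \<and> 0 < nr N")
  case True
  obtain a b where a: "a < nr M" "row_wt M a = rmax M" and b: "b < nr N" "row_wt N b = rmax N"
    using True rmax_attained by metis
  show ?thesis
  proof (rule rmax_eqI)
    show "row_wt (kron M N) i \<le> rmax M * rmax N" if "i < nr (kron M N)" for i
      using that True by (auto simp: row_wt_kron less_mult_imp_div_less intro!: mult_le_mono row_le_rmax)
    show "row_wt (kron M N) (a * nr N + b) = rmax M * rmax N"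
      using a b by (simp add: row_wt_kron)
  qed (use a b mult_add_less_mult in simp)
next
  case False
  then show ?thesis by (auto simp: rmax_def)
qed

lemma cmax_kron: "cmax (kron M N) = cmax M * cmax N"
  using rmax_kron[of "transp M" "transp N"] by (simp add: transp_kron[symmetric])

lemma rmax_ident: "0 < n \<Longrightarrow> rmax (ident n) = 1"
  by (rule rmax_eqI[of _ _ 0]) (simp_all add: row_wt_ident)

lemma cmax_ident: "0 < n \<Longrightarrow> cmax (ident n) = 1"
  using rmax_ident[of n] by (metis rmax_transp transp_ident)

lemma delta_kron_ident_right: "0 < n \<Longrightarrow> delta (kron M (ident n)) = delta M"
  by (simp add: delta_def rmax_kron cmax_kron rmax_ident cmax_ident)

lemma delta_kron_ident_left: "0 < n \<Longrightarrow> delta (kron (ident n) M) = delta M"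
  by (simp add: delta_def rmax_kron cmax_kron rmax_ident cmax_ident)

lemma rmax_vcat:
  assumes "nc N = nc M"
  shows "rmax (vcat M N) = max (rmax M) (rmax N)"
proof (rule antisym)
  have "row_wt (vcat M N) i \<le> max (rmax M) (rmax N)" if "i < nr M + nr N" for i
  proof (cases "i < nr M")
    case True
    then show ?thesis using assms row_le_rmax[of i M] by (simp add: row_wt_vcat)
  next
    case False
    then have "i - nr M < nr N" using that by linarith
    then show ?thesis using False assms row_le_rmax[of "i - nr M" N] by (simp add: row_wt_vcat)
  qed
  then show "rmax (vcat M N) \<le> max (rmax M) (rmax N)"
    unfolding rmax_le_iff by simp
  have "row_wt M i \<le> rmax (vcat M N)" if "i < nr M" for i
    using that assms row_le_rmax[of i "vcat M N"] by (simp add: row_wt_vcat)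
  moreover have "row_wt N i \<le> rmax (vcat M N)" if "i < nr N" for i
    using that assms row_le_rmax[of "nr M + i" "vcat M N"] by (simp add: row_wt_vcat)
  ultimately show "max (rmax M) (rmax N) \<le> rmax (vcat M N)"
    by (simp add: rmax_le_iff)
qed

lemma cmax_hcat:
  assumes "nr N = nr M"
  shows "cmax (hcat M N) = max (cmax M) (cmax N)"
  using rmax_vcat[of "transp N" "transp M"] assms by (simp add: transp_hcat[symmetric])

lemma rmax_hcat_commute: "nr N = nr M \<Longrightarrow> rmax (hcat M N) = rmax (hcat N M)"
  unfolding rmax_def by (simp add: row_wt_hcat add.commute)

lemma cmax_vcat_commute: "nc N = nc M \<Longrightarrow> cmax (vcat M N) = cmax (vcat N M)"
  using rmax_hcat_commute[of "transp N" "transp M"] by (simp add: transp_vcat[symmetric])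

lemma rmax_hcat_kron_ident:
  assumes "0 < nr M" and "0 < nr N"
  shows "rmax (hcat (kron M (ident (nr N))) (kron (ident (nr M)) N)) = rmax M + rmax N"
proof -
  obtain a b where a: "a < nr M" "row_wt M a = rmax M" and b: "b < nr N" "row_wt N b = rmax N"
    using assms rmax_attained by metis
  show ?thesis
  proof (rule rmax_eqI)
    show "row_wt (hcat (kron M (ident (nr N))) (kron (ident (nr M)) N)) i \<le> rmax M + rmax N"
      if "i < nr (hcat (kron M (ident (nr N))) (kron (ident (nr M)) N))" for i
      using that assms
      by (auto simp: row_wt_hcat row_wt_kron row_wt_ident less_mult_imp_div_less intro!: add_mono row_le_rmax)
    show "row_wt (hcat (kron M (ident (nr N))) (kron (ident (nr M)) N)) (a * nr N + b) = rmax M + rmax N"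
      using a b by (simp add: row_wt_hcat row_wt_kron row_wt_ident)
  qed (use a b mult_add_less_mult in simp)
qed

lemma cmax_vcat_kron_ident:
  assumes "0 < nc M" and "0 < nc N"
  shows "cmax (vcat (kron M (ident (nc N))) (kron (ident (nc M)) N)) = cmax M + cmax N"
proof -
  have "transp (vcat (kron M (ident (nc N))) (kron (ident (nc M)) N))
      = hcat (kron (transp M) (ident (nr (transp N)))) (kron (ident (nr (transp M))) (transp N))"
    by (simp add: transp_vcat transp_kron)
  then show ?thesis
    using rmax_hcat_kron_ident[of "transp M" "transp N"] assms by (metis rmax_transp bmat_dims(3))
qed

lemma vcat_hcat_interchange:
  assumes "nc Z1 = nc X1" and "nr X2 = nr X1"
  shows "vcat (hcat X1 X2) (hcat Z1 Z2) = hcat (vcat X1 Z1) (vcat X2 Z2)"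
  using assms unfolding vcat_def hcat_def by (simp add: fun_eq_iff)

theorem delta_hypergraph_product:
  assumes "0 < nr A" "0 < nc A" "0 < nr B" "0 < nc B"
  defines "HX \<equiv> hcat (kron A (ident (nr B))) (kron (ident (nr A)) B)"
    and "HZ \<equiv> hcat (kron (ident (nc A)) (transp B)) (kron (transp A) (ident (nc B)))"
  shows "delta (vcat HX HZ) = delta A + delta B"
proof -
  have "rmax HX = rmax A + rmax B"
    unfolding HX_def using assms by (simp add: rmax_hcat_kron_ident)
  moreover have "rmax HZ = cmax A + cmax B"
    unfolding HZ_def using assms rmax_hcat_kron_ident[of "transp A" "transp B"]
    by (simp add: rmax_hcat_commute[of "kron (ident (nc A)) (transp B)"] add.commute)
  ultimately have rows: "rmax (vcat HX HZ) = max (rmax A + rmax B) (cmax A + cmax B)"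
    by (simp add: rmax_vcat HX_def HZ_def)
  have "cmax (vcat (kron A (ident (nr B))) (kron (ident (nc A)) (transp B))) = cmax A + rmax B"
    using assms cmax_vcat_kron_ident[of A "transp B"] by simp
  moreover have "cmax (vcat (kron (ident (nr A)) B) (kron (transp A) (ident (nc B)))) = rmax A + cmax B"
    using assms cmax_vcat_kron_ident[of "transp A" B]
    by (simp add: cmax_vcat_commute[of "kron (transp A) (ident (nc B))"] add.commute)
  moreover have "vcat HX HZ = hcat (vcat (kron A (ident (nr B))) (kron (ident (nc A)) (transp B)))
                                   (vcat (kron (ident (nr A)) B) (kron (transp A) (ident (nc B))))"
    unfolding HX_def HZ_def by (rule vcat_hcat_interchange) simp_all
  ultimately have columns: "cmax (vcat HX HZ) = max (cmax A + rmax B) (rmax A + cmax B)"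
    by (simp add: cmax_hcat)
  show ?thesis
    unfolding delta_def rows columns by (simp add: max_def)
qed

section \<open>Edge colourings of Tanner graphs and syndrome extraction depth\<close>

definition tanner_edges :: "bmat \<Rightarrow> (nat \<times> nat) set" where
  "tanner_edges M = {(i, j). i < nr M \<and> j < nc M \<and> ent M i j}"

lemma proper_colouring_iff_tanner_edges:
  "proper_colouring M k col \<longleftrightarrow> proper_edge_colouring (tanner_edges M) k col"
  unfolding proper_colouring_def proper_edge_colouring_def tanner_edges_def by blast

lemma finite_tanner_edges: "finite (tanner_edges M)"
  by (rule finite_subset[of _ "{..<nr M} \<times> {..<nc M}"]) (auto simp: tanner_edges_def)

lemma card_tanner_row_le_rmax: "card {j. (i, j) \<in> tanner_edges M} \<le> rmax M"
proof (cases "i < nr M")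
  case True
  then have "card {j. (i, j) \<in> tanner_edges M} = row_wt M i"
    by (simp add: tanner_edges_def row_wt_def)
  then show ?thesis using row_le_rmax[OF True] by simp
qed (simp add: tanner_edges_def)

lemma card_tanner_col_le_cmax: "card {i. (i, j) \<in> tanner_edges M} \<le> cmax M"
proof (cases "j < nc M")
  case True
  then have "card {i. (i, j) \<in> tanner_edges M} = col_wt M j"
    by (simp add: tanner_edges_def col_wt_def conj_commute)
  then show ?thesis using col_le_cmax[OF True] by simp
qed (simp add: tanner_edges_def)

lemma minimal_colouring_exists: "\<exists>col. minimal_colouring M (delta M) col"
proof -
  have "\<exists>col. proper_edge_colouring (tanner_edges M) (delta M) col"
    using finite_tanner_edges card_tanner_row_le_rmax card_tanner_col_le_cmax
    by (intro konig_edge_colouring) (auto simp: delta_def intro: le_trans max.coboundedI1 max.coboundedI2)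
  then show ?thesis
    by (simp add: minimal_colouring_def proper_colouring_iff_tanner_edges)
qed

lemma finite_sec_ops: "finite (sec_ops H m)"
proof -
  have "sec_ops H m \<subseteq> (\<Union>r<m. \<Union>i<nr H. {Prep r i, Meas r i} \<union> CX r i ` {..<nc H})"
    unfolding sec_ops_def by auto
  then show ?thesis by (rule finite_subset) simp
qed

lemma card_le_sec_steps:
  assumes S: "sec_schedule H m \<tau>" and X: "X \<subseteq> sec_ops H m"
    and shared: "\<And>p. p \<in> X \<Longrightarrow> q \<in> op_qubits p"
  shows "card X \<le> sec_steps H m \<tau>"
proof -
  have "inj_on \<tau> X"
    using S X shared unfolding sec_schedule_def inj_on_def by blast
  moreover have "\<tau> ` X \<subseteq> {1..sec_steps H m \<tau>}"
    using S X finite_sec_ops unfolding sec_schedule_def sec_steps_def by (auto intro!: Max_ge)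
  ultimately show ?thesis
    using card_inj_on_le[of \<tau> X "{1..sec_steps H m \<tau>}"] by simp
qed

lemma sec_steps_ge_row_wt:
  assumes S: "sec_schedule H m \<tau>" and "i < nr H"
  shows "m * row_wt H i \<le> sec_steps H m \<tau>"
proof -
  let ?X = "(\<lambda>(r, j). CX r i j) ` ({..<m} \<times> {j. j < nc H \<and> ent H i j})"
  have "inj_on (\<lambda>(r, j). CX r i j) ({..<m} \<times> {j. j < nc H \<and> ent H i j})"
    by (rule inj_onI) auto
  then have "card ?X = m * row_wt H i"
    by (simp add: card_image card_cartesian_product row_wt_def)
  moreover have "card ?X \<le> sec_steps H m \<tau>"
    by (rule card_le_sec_steps[OF S, of _ "Anc i"]) (use assms(2) in \<open>auto simp: sec_ops_def\<close>)
  ultimately show ?thesis by simp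
qed

lemma sec_steps_ge_col_wt:
  assumes S: "sec_schedule H m \<tau>" and "j < nc H"
  shows "m * col_wt H j \<le> sec_steps H m \<tau>"
proof -
  let ?X = "(\<lambda>(r, i). CX r i j) ` ({..<m} \<times> {i. i < nr H \<and> ent H i j})"
  have "inj_on (\<lambda>(r, i). CX r i j) ({..<m} \<times> {i. i < nr H \<and> ent H i j})"
    by (rule inj_onI) auto
  then have "card ?X = m * col_wt H j"
    by (simp add: card_image card_cartesian_product col_wt_def)
  moreover have "card ?X \<le> sec_steps H m \<tau>"
    by (rule card_le_sec_steps[OF S, of _ "Dat j"]) (use assms(2) in \<open>auto simp: sec_ops_def\<close>)
  ultimately show ?thesis by simp
qed

lemma sec_steps_ge_delta:
  assumes S: "sec_schedule H m \<tau>"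
  shows "m * delta H \<le> sec_steps H m \<tau>"
proof -
  have "m * rmax H \<le> sec_steps H m \<tau>"
  proof (cases "nr H = 0")
    case False
    then show ?thesis using rmax_attained sec_steps_ge_row_wt[OF S] by (metis neq0_conv)
  qed (simp add: rmax_def)
  moreover have "m * cmax H \<le> sec_steps H m \<tau>"
  proof (cases "nc H = 0")
    case False
    then show ?thesis using cmax_attained sec_steps_ge_col_wt[OF S] by (metis neq0_conv)
  qed (simp add: cmax_def)
  ultimately show ?thesis by (simp add: delta_def)
qed

lemma sec_depth_ge_delta:
  assumes "sec_has_depth H sched t"
  shows "real (delta H) \<le> t"
proof (rule LIMSEQ_le_const)
  show "(\<lambda>m. real (sec_steps H m (sched m)) / real m) \<longlonglongrightarrow> t"
    using assms unfolding sec_has_depth_def by blast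
  have "real (delta H) \<le> real (sec_steps H m (sched m)) / real m" if "1 \<le> m" for m
  proof -
    have "real m * real (delta H) \<le> real (sec_steps H m (sched m))"
      using sec_steps_ge_delta[of H m "sched m"] assms unfolding sec_has_depth_def
      by (metis of_nat_le_iff of_nat_mult)
    then show ?thesis using that by (simp add: field_simps)
  qed
  then show "\<exists>N. \<forall>m\<ge>N. real (delta H) \<le> real (sec_steps H m (sched m)) / real m"
    by blast
qed

theorem proposition1:
  fixes mA nA mB nB :: nat and A B :: bmat
  assumes dimA: "nr A = mA" "nc A = nA" and dimB: "nr B = mB" "nc B = nB"
    and pos: "0 < mA" "0 < nA" "0 < mB" "0 < nB"
  defines "LX \<equiv> kron A (ident mB)" and "RX \<equiv> kron (ident mA) B"
    and "LZ \<equiv> kron (ident nA) (transp B)" and "RZ \<equiv> kron (transp A) (ident nB)"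
  defines "HX \<equiv> hcat LX RX" and "HZ \<equiv> hcat LZ RZ"
  shows "(\<exists>cLX cRX cLZ cRZ.
            minimal_colouring LX (delta LX) cLX \<and> minimal_colouring RX (delta RX) cRX \<and>
            minimal_colouring LZ (delta LZ) cLZ \<and> minimal_colouring RZ (delta RZ) cRZ)
       \<and> (\<forall>kLX kRX kLZ kRZ cLX cRX cLZ cRZ.
            minimal_colouring LX kLX cLX \<and> minimal_colouring RX kRX cRX \<and>
            minimal_colouring LZ kLZ cLZ \<and> minimal_colouring RZ kRZ cRZ \<longrightarrow>
            lrc_depth kLX kRX kLZ kRZ = delta A + delta B + 2)
       \<and> delta (vcat HX HZ) = delta A + delta B
       \<and> (\<forall>sched t. sec_has_depth (vcat HX HZ) sched t \<longrightarrow> real (delta A + delta B) \<le> t)"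
proof -
  have "delta LX = delta A" "delta RZ = delta A" "delta RX = delta B" "delta LZ = delta B"
    unfolding LX_def RX_def LZ_def RZ_def
    using pos by (simp_all add: delta_kron_ident_right delta_kron_ident_left)
  then have depth: "lrc_depth kLX kRX kLZ kRZ = delta A + delta B + 2"
    if "minimal_colouring LX kLX cLX" "minimal_colouring RX kRX cRX"
       "minimal_colouring LZ kLZ cLZ" "minimal_colouring RZ kRZ cRZ"
    for kLX kRX kLZ kRZ cLX cRX cLZ cRZ
    using that by (simp add: minimal_colouring_def lrc_depth_def)
  have delta_H: "delta (vcat HX HZ) = delta A + delta B"
    using delta_hypergraph_product[of A B] pos
    unfolding HX_def HZ_def LX_def RX_def LZ_def RZ_def dimA dimB by simp
  show ?thesis
    using minimal_colouring_exists depth delta_H sec_depth_ge_delta[of "vcat HX HZ"] by metis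
qed

end
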